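(* Let $1\le p,q<\infty$, $\theta>0$ and $\varepsilon_0\in(0,\infty)$. For $g\in l^{q),\theta}(L^p)$ define $$\|g\|_{p,q),\theta,\varepsilon_0}:=\sup_{0<\varepsilon\le\varepsilon_0}\varepsilon^{\frac{\theta}{q(1+\varepsilon)}}\|g\|_{l^{q(1+\varepsilon)}(L^p)}.$$ Then $\|\cdot\|_{p,q),\theta}$ and $\|\cdot\|_{p,q),\theta,\varepsilon_0}$ are equivalent norms; more precisely, for every such $g$, $$\|g\|_{p,q),\theta,\varepsilon_0}\le\|g\|_{p,q),\theta}\le (c(\varepsilon_0))^{\frac{\theta}{q}}\|g\|_{p,q),\theta,\varepsilon_0},\qquad c(\varepsilon_0)=\frac{1}{\mathrm e\,W(1/\mathrm e)}\,\varepsilon_0^{-\frac{1}{1+\varepsilon_0}},$$ where $W$ is the Lambert function.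
   Context: Let $X$ be one of $\mathbb N,\mathbb N_0,\mathbb Z$ and $I_k=[k,k+1)$ for $k\in X$. For $1\le r<\infty$ and $1\le p<\infty$, $\|g\|_{l^{r}(L^p)}:=\Big(\sum_{k\in X}\Big(\int_{I_k}|g|^p\,dx\Big)^{r/p}\Big)^{1/r}$. The space $l^{q),\theta}(L^p)$ consists of complex-valued measurable $g$ on $\bigcup_{k\in X}I_k$ with $g\chi_{I_k}\in L^p$ for all $k$ and $\|g\|_{p,q),\theta}:=\sup_{\varepsilon>0}\varepsilon^{\frac{\theta}{q(1+\varepsilon)}}\|g\|_{l^{q(1+\varepsilon)}(L^p)}<\infty$. The Lambert function $W$ is the inverse of $y\mapsto y\mathrm e^y$ on $(0,\infty)$. *)

theory Defs
  imports "HOL-Analysis.Analysis"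
begin

definition Ik :: "int \<Rightarrow> real set" where
  "Ik k = {real_of_int k..<real_of_int k + 1}"

definition lrLp_norm :: "int set \<Rightarrow> real \<Rightarrow> real \<Rightarrow> (real \<Rightarrow> complex) \<Rightarrow> real" where
  "lrLp_norm X p r g =
     (\<Sum>\<^sub>\<infinity>k\<in>X. (LINT x:Ik k|lebesgue. norm (g x) powr p) powr (r / p)) powr (1 / r)"

definition lrLp_finite :: "int set \<Rightarrow> real \<Rightarrow> real \<Rightarrow> (real \<Rightarrow> complex) \<Rightarrow> bool" where
  "lrLp_finite X p r g \<longleftrightarrow>
     (\<lambda>k. (LINT x:Ik k|lebesgue. norm (g x) powr p) powr (r / p)) summable_on X"

definition in_grand_space :: "int set \<Rightarrow> real \<Rightarrow> real \<Rightarrow> real \<Rightarrow> (real \<Rightarrow> complex) \<Rightarrow> bool" where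
  "in_grand_space X p q \<theta> g \<longleftrightarrow>
     set_borel_measurable lebesgue (\<Union>k\<in>X. Ik k) g \<and>
     (\<forall>k\<in>X. set_integrable lebesgue (Ik k) (\<lambda>x. norm (g x) powr p)) \<and>
     (\<forall>\<epsilon>>0. lrLp_finite X p (q * (1 + \<epsilon>)) g) \<and>
     bdd_above ((\<lambda>\<epsilon>. \<epsilon> powr (\<theta> / (q * (1 + \<epsilon>))) * lrLp_norm X p (q * (1 + \<epsilon>)) g) ` {0<..})"

definition grand_norm :: "int set \<Rightarrow> real \<Rightarrow> real \<Rightarrow> real \<Rightarrow> (real \<Rightarrow> complex) \<Rightarrow> real" where
  "grand_norm X p q \<theta> g =
     (SUP \<epsilon>\<in>{0<..}. \<epsilon> powr (\<theta> / (q * (1 + \<epsilon>))) * lrLp_norm X p (q * (1 + \<epsilon>)) g)"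

definition grand_norm_eps :: "int set \<Rightarrow> real \<Rightarrow> real \<Rightarrow> real \<Rightarrow> real \<Rightarrow> (real \<Rightarrow> complex) \<Rightarrow> real" where
  "grand_norm_eps X p q \<theta> \<epsilon>0 g =
     (SUP \<epsilon>\<in>{0<..\<epsilon>0}. \<epsilon> powr (\<theta> / (q * (1 + \<epsilon>))) * lrLp_norm X p (q * (1 + \<epsilon>)) g)"

definition LambertW :: "real \<Rightarrow> real" where
  "LambertW x = (THE y. 0 < y \<and> y * exp y = x)"

definition c_eps :: "real \<Rightarrow> real" where
  "c_eps \<epsilon>0 = 1 / (exp 1 * LambertW (1 / exp 1)) * \<epsilon>0 powr (- 1 / (1 + \<epsilon>0))"

end

theory Submission
  imports Defs
begin

text \<open>For \<open>\<epsilon> > \<epsilon>0\<close> the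
  \<open>l\<^sup>r(L\<^sup>p)\<close> norm is nonincreasing in \<open>r\<close> (the embedding \<open>l\<^sup>s \<subseteq> l\<^sup>r\<close>), so only the
  weight \<open>\<epsilon>\<^bsup>\<theta>/(q(1+\<epsilon>))\<^esup>\<close> can grow; but \<open>\<epsilon>\<^bsup>1/(1+\<epsilon>)\<^esup>\<close> is bounded on \<open>(0,\<infinity>)\<close> by its
  maximum \<open>exp w = 1/(e w)\<close>, \<open>w = W(1/e)\<close>, attained at \<open>\<epsilon> = 1/w\<close>. Comparing with the
  weight at \<open>\<epsilon>0\<close> gives the factor \<open>c(\<epsilon>0)\<^bsup>\<theta>/q\<^esup>\<close>.\<close>

lemma strict_mono_on_mult_exp: "strict_mono_on {0..} (\<lambda>y::real. y * exp y)"
  by (rule strict_mono_onI) (auto intro!: mult_strict_mono)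

lemma LambertW:
  assumes "0 < x"
  shows "0 < LambertW x" and "LambertW x * exp (LambertW x) = x"
proof -
  have "continuous_on {0..x} (\<lambda>y. y * exp y)"
    by (intro continuous_intros)
  moreover have "x \<le> x * exp x"
    using assms by simp
  ultimately have "\<exists>y. 0 \<le> y \<and> y \<le> x \<and> y * exp y = x"
    using assms IVT'[of "\<lambda>y. y * exp y" 0 x x] by simp
  then obtain y where y: "0 \<le> y" "y * exp y = x" by blast
  with assms have "0 < y" by (cases "y = 0") auto
  moreover have "z = y" if "0 < z" "z * exp z = x" for z
    using strict_mono_on_eqD[OF strict_mono_on_mult_exp, of z y] that y by simp
  ultimately have "LambertW x = y"
    unfolding LambertW_def using y by (intro the_equality) blast+
  with \<open>0 < y\<close> y show "0 < LambertW x" and "LambertW x * exp (LambertW x) = x" by simp_all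
qed

lemma LambertW_inverse_e:
  defines "w \<equiv> LambertW (1 / exp 1)"
  shows "0 < w" and "ln w + w = -1"
proof -
  show "0 < w"
    unfolding w_def by (rule LambertW) simp
  have "ln (w * exp w) = ln (1 / exp 1)"
    unfolding w_def by (subst LambertW(2)) simp_all
  then show "ln w + w = -1"
    using \<open>0 < w\<close> by (simp add: ln_mult ln_div)
qed

lemma powr_inverse_one_plus_le_exp_LambertW:
  fixes e :: real
  assumes "0 < e"
  shows "e powr (1 / (1 + e)) \<le> exp (LambertW (1 / exp 1))"
proof -
  define w where "w = LambertW (1 / exp 1)"
  have "0 < w" and lnw: "ln w + w = -1"
    unfolding w_def by (rule LambertW_inverse_e)+
  have "ln e + ln w \<le> e * w - 1"
    using ln_le_minus_one[of "e * w"] assms \<open>0 < w\<close> by (simp add: ln_mult)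
  then have "ln e / (1 + e) \<le> w"
    using assms lnw by (simp add: field_simps)
  then show ?thesis
    using assms unfolding w_def by (simp add: powr_def)
qed

lemma c_eps_eq: "c_eps e0 = exp (LambertW (1 / exp 1)) / e0 powr (1 / (1 + e0))"
proof -
  define w where "w = LambertW (1 / exp 1)"
  have "0 < w"
    unfolding w_def by (rule LambertW) simp
  moreover have "w * exp w = 1 / exp 1"
    unfolding w_def by (rule LambertW) simp
  ultimately have "1 / (exp 1 * w) = exp w"
    by (simp add: field_simps)
  moreover have "e0 powr (- 1 / (1 + e0)) = 1 / e0 powr (1 / (1 + e0))"
    using powr_minus_divide[of e0 "1 / (1 + e0)"] by simp
  ultimately show ?thesis
    unfolding c_eps_def w_def[symmetric] by simp
qed

lemma one_le_c_eps:
  assumes "0 < e0"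
  shows "1 \<le> c_eps e0"
  using powr_inverse_one_plus_le_exp_LambertW[OF assms] assms by (simp add: c_eps_eq le_divide_eq)

lemma infsum_powr_le_powr_infsum:
  fixes b :: "'a \<Rightarrow> real"
  assumes b: "b summable_on X" and nonneg: "\<And>k. k \<in> X \<Longrightarrow> 0 \<le> b k" and "1 \<le> t"
  shows "(\<Sum>\<^sub>\<infinity>k\<in>X. b k powr t) \<le> (\<Sum>\<^sub>\<infinity>k\<in>X. b k) powr t"
proof -
  define B where "B = (\<Sum>\<^sub>\<infinity>k\<in>X. b k)"
  have "0 \<le> B"
    unfolding B_def using nonneg by (rule infsum_nonneg)
  have dom: "b k powr t \<le> B powr (t - 1) * b k" if "k \<in> X" for k
  proof (cases "b k = 0")
    case False
    have "b k \<le> B"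
      unfolding B_def using infsum_mono2[of b "{k}" X] b nonneg that by auto
    then have "b k powr (t - 1) * b k \<le> B powr (t - 1) * b k"
      using nonneg[OF that] \<open>1 \<le> t\<close> by (intro mult_right_mono powr_mono2) auto
    then show ?thesis
      using False nonneg[OF that] by (simp add: powr_diff)
  qed (use \<open>1 \<le> t\<close> in simp)
  have dom_summable: "(\<lambda>k. B powr (t - 1) * b k) summable_on X"
    using b by (rule summable_on_cmult_right)
  then have "(\<lambda>k. norm (B powr (t - 1) * b k)) summable_on X"
    by (rule summable_on_iff_abs_summable_on_real[THEN iffD1])
  then have "(\<lambda>k. norm (b k powr t)) summable_on X"
    by (rule Infinite_Sum.abs_summable_on_comparison_test) (use dom nonneg \<open>0 \<le> B\<close> in auto)
  then have "(\<lambda>k. b k powr t) summable_on X"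
    by (rule summable_on_iff_abs_summable_on_real[THEN iffD2])
  then have "(\<Sum>\<^sub>\<infinity>k\<in>X. b k powr t) \<le> (\<Sum>\<^sub>\<infinity>k\<in>X. B powr (t - 1) * b k)"
    using dom_summable dom by (rule infsum_mono)
  also have "\<dots> = B powr (t - 1) * B"
    unfolding B_def by (rule infsum_cmult_right) (use b in auto)
  also have "\<dots> = B powr t"
    using \<open>0 \<le> B\<close> by (cases "B = 0") (simp_all add: powr_diff)
  finally show ?thesis
    unfolding B_def .
qed

lemma lrLp_norm_nonneg: "0 \<le> lrLp_norm X p r g"
  unfolding lrLp_norm_def by simp

lemma lrLp_norm_antimono:
  assumes "0 < p" "0 < s" "s \<le> r" and finite: "lrLp_finite X p s g"
  shows "lrLp_norm X p r g \<le> lrLp_norm X p s g"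
proof -
  define b where "b k = (LINT x:Ik k|lebesgue. norm (g x) powr p) powr (s / p)" for k
  define B where "B = (\<Sum>\<^sub>\<infinity>k\<in>X. b k)"
  have "b summable_on X"
    using finite unfolding lrLp_finite_def b_def .
  have b_nonneg: "0 \<le> b k" for k
    unfolding b_def by simp
  have "(LINT x:Ik k|lebesgue. norm (g x) powr p) powr (r / p) = b k powr (r / s)" for k
    using assms unfolding b_def by (simp add: powr_powr)
  then have "lrLp_norm X p r g = (\<Sum>\<^sub>\<infinity>k\<in>X. b k powr (r / s)) powr (1 / r)"
    unfolding lrLp_norm_def by simp
  also have "\<dots> \<le> (B powr (r / s)) powr (1 / r)"
    unfolding B_def using \<open>b summable_on X\<close> b_nonneg assms
    by (intro powr_mono2 infsum_powr_le_powr_infsum infsum_nonneg) auto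
  also have "\<dots> = lrLp_norm X p s g"
    using assms unfolding lrLp_norm_def B_def b_def by (simp add: powr_powr)
  finally show ?thesis .
qed

definition weighted_lrLp_norm :: "int set \<Rightarrow> real \<Rightarrow> real \<Rightarrow> real \<Rightarrow> (real \<Rightarrow> complex) \<Rightarrow> real \<Rightarrow> real" where
  "weighted_lrLp_norm X p q \<theta> g e = e powr (\<theta> / (q * (1 + e))) * lrLp_norm X p (q * (1 + e)) g"

lemma weighted_lrLp_norm_nonneg: "0 \<le> weighted_lrLp_norm X p q \<theta> g e"
  unfolding weighted_lrLp_norm_def by (simp add: lrLp_norm_nonneg)

lemma weighted_lrLp_norm_le_c_eps:
  assumes "0 < p" "0 < q" "0 \<le> \<theta>" "0 < e0" "e0 \<le> e" and finite: "lrLp_finite X p (q * (1 + e0)) g"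
  shows "weighted_lrLp_norm X p q \<theta> g e \<le> c_eps e0 powr (\<theta> / q) * weighted_lrLp_norm X p q \<theta> g e0"
proof -
  define E where "E = exp (LambertW (1 / exp 1))"
  have "e powr (\<theta> / (q * (1 + e))) = (e powr (1 / (1 + e))) powr (\<theta> / q)"
    by (simp add: powr_powr mult.commute)
  also have "\<dots> \<le> E powr (\<theta> / q)"
    unfolding E_def using assms powr_inverse_one_plus_le_exp_LambertW[of e] by (intro powr_mono2) auto
  also have "\<dots> = (c_eps e0 * e0 powr (1 / (1 + e0))) powr (\<theta> / q)"
    unfolding E_def c_eps_eq using assms by simp
  also have "\<dots> = c_eps e0 powr (\<theta> / q) * e0 powr (\<theta> / (q * (1 + e0)))"
    using assms one_le_c_eps[of e0] by (simp add: powr_mult powr_powr mult.commute)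
  finally have weight: "e powr (\<theta> / (q * (1 + e))) \<le> c_eps e0 powr (\<theta> / q) * e0 powr (\<theta> / (q * (1 + e0)))" .
  have "lrLp_norm X p (q * (1 + e)) g \<le> lrLp_norm X p (q * (1 + e0)) g"
    using assms by (intro lrLp_norm_antimono) auto
  with weight have "weighted_lrLp_norm X p q \<theta> g e \<le>
      (c_eps e0 powr (\<theta> / q) * e0 powr (\<theta> / (q * (1 + e0)))) * lrLp_norm X p (q * (1 + e0)) g"
    unfolding weighted_lrLp_norm_def by (intro mult_mono) (simp_all add: lrLp_norm_nonneg)
  then show ?thesis
    unfolding weighted_lrLp_norm_def by (simp add: mult.assoc)
qed

lemma cSUP_le_mult_cSUP_Ioc:
  fixes F :: "real \<Rightarrow> real"
  assumes bdd: "bdd_above (F ` {0<..})" and "0 < e0" "1 \<le> C" and nonneg: "\<And>e. 0 \<le> F e"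
    and tail: "\<And>e. e0 < e \<Longrightarrow> F e \<le> C * F e0"
  shows "(SUP e\<in>{0<..}. F e) \<le> C * (SUP e\<in>{0<..e0}. F e)"
proof -
  define G where "G = (SUP e\<in>{0<..e0}. F e)"
  have "bdd_above (F ` {0<..e0})"
    by (rule bdd_above_mono[OF bdd]) auto
  then have F_le_G: "F e \<le> G" if "0 < e" "e \<le> e0" for e
    unfolding G_def using that by (intro cSUP_upper) auto
  have "0 \<le> G"
    using nonneg[of e0] F_le_G[of e0] \<open>0 < e0\<close> by linarith
  have "F e \<le> C * G" if "0 < e" for e
  proof (cases "e \<le> e0")
    case True
    then have "F e \<le> G"
      using F_le_G that by simp
    also have "\<dots> \<le> C * G"
      using \<open>1 \<le> C\<close> \<open>0 \<le> G\<close> by (simp add: mult_le_cancel_right1)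
    finally show ?thesis .
  next
    case False
    then have "F e \<le> C * F e0"
      by (intro tail) simp
    also have "\<dots> \<le> C * G"
      using F_le_G[of e0] \<open>0 < e0\<close> \<open>1 \<le> C\<close> by simp
    finally show ?thesis .
  qed
  then show ?thesis
    unfolding G_def by (intro cSUP_least) auto
qed

theorem lemma2p7:
  fixes X :: "int set" and p q \<theta> \<epsilon>0 :: real and g :: "real \<Rightarrow> complex"
  assumes "X = {1..} \<or> X = {0..} \<or> X = UNIV"
    and "1 \<le> p" and "1 \<le> q" and "0 < \<theta>" and "0 < \<epsilon>0"
    and "in_grand_space X p q \<theta> g"
  shows "grand_norm_eps X p q \<theta> \<epsilon>0 g \<le> grand_norm X p q \<theta> g \<and>
         grand_norm X p q \<theta> g \<le> c_eps \<epsilon>0 powr (\<theta> / q) * grand_norm_eps X p q \<theta> \<epsilon>0 g"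
proof -
  define F where "F = weighted_lrLp_norm X p q \<theta> g"
  have bdd: "bdd_above (F ` {0<..})" and finite: "lrLp_finite X p (q * (1 + \<epsilon>0)) g"
    using assms(5,6) unfolding in_grand_space_def F_def weighted_lrLp_norm_def by auto
  have grand_norm: "grand_norm X p q \<theta> g = (SUP e\<in>{0<..}. F e)"
    unfolding grand_norm_def F_def weighted_lrLp_norm_def ..
  have grand_norm_eps: "grand_norm_eps X p q \<theta> \<epsilon>0 g = (SUP e\<in>{0<..\<epsilon>0}. F e)"
    unfolding grand_norm_eps_def F_def weighted_lrLp_norm_def ..
  have "(SUP e\<in>{0<..\<epsilon>0}. F e) \<le> (SUP e\<in>{0<..}. F e)"
    using bdd assms(5) by (intro cSUP_subset_mono) auto
  moreover have "(SUP e\<in>{0<..}. F e) \<le> c_eps \<epsilon>0 powr (\<theta> / q) * (SUP e\<in>{0<..\<epsilon>0}. F e)"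
  proof (rule cSUP_le_mult_cSUP_Ioc)
    show "1 \<le> c_eps \<epsilon>0 powr (\<theta> / q)"
      using one_le_c_eps assms by (simp add: ge_one_powr_ge_zero)
    show "F e \<le> c_eps \<epsilon>0 powr (\<theta> / q) * F \<epsilon>0" if "\<epsilon>0 < e" for e
      unfolding F_def using assms finite that by (intro weighted_lrLp_norm_le_c_eps) auto
  qed (use bdd assms(5) weighted_lrLp_norm_nonneg in \<open>auto simp: F_def\<close>)
  ultimately show ?thesis
    unfolding grand_norm grand_norm_eps by simp
qed

end
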